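(* Let $n \ge 1$, $t \ge 1$ and $\ell \ge 1$ be integers. Fix a set of nonterminal symbols $V = \{\mathtt{NT}_1, \dotsc, \mathtt{NT}_n\}$, a distinguished start symbol $S \notin V$, and a terminal alphabet $\Sigma = \{\mathtt{t}_1, \dotsc, \mathtt{t}_t\}$ with $|\Sigma| = t$. Then the number of distinct reduced context-free grammars in Chomsky normal form with start symbol $S$, nonterminals $V$ and terminals $\Sigma$ is at least $2^{n^3 + nt - 2n}$, and the number of distinct strings of length $\ell$ over $\Sigma$ is $t^\ell$.
   Context: A context-free grammar in Chomsky normal form here consists of a finite set of production rules, each either lexical, of the form $A \to a$ with $A \in V$ and $a \in \Sigma$, or nonlexical, of the form $A \to B\,C$ with $A \in \{S\} \cup V$ and $B, C \in V$. Two grammars (over the same fixed $S$, $V$, $\Sigma$) are distinct iff their sets of production rules differ. A grammar is reduced if every nonterminal in $V$ is accessible (appears in some derivation starting from $S$) and productive (derives some string of terminals). *)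

theory Defs
  imports Main
begin

datatype nt = Start | NT nat

datatype rule = Lex nt nat | Bin nt nt nt

datatype sym = N nt | T nat

definition nonterms :: "nat \<Rightarrow> nt set" where
  "nonterms n = NT ` {1..n}"

definition terms :: "nat \<Rightarrow> nat set" where
  "terms t = {1..t}"

definition rule_ok :: "nat \<Rightarrow> nat \<Rightarrow> rule \<Rightarrow> bool" where
  "rule_ok n t r = (case r of
      Lex A a \<Rightarrow> A \<in> nonterms n \<and> a \<in> terms t
    | Bin A B C \<Rightarrow> A \<in> insert Start (nonterms n) \<and> B \<in> nonterms n \<and> C \<in> nonterms n)"

definition cnf_grammar :: "nat \<Rightarrow> nat \<Rightarrow> rule set \<Rightarrow> bool" where
  "cnf_grammar n t G = (\<forall>r\<in>G. rule_ok n t r)"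

inductive step :: "rule set \<Rightarrow> sym list \<Rightarrow> sym list \<Rightarrow> bool" for G where
  stepLex: "Lex A a \<in> G \<Longrightarrow> step G (u @ [N A] @ v) (u @ [T a] @ v)"
| stepBin: "Bin A B C \<in> G \<Longrightarrow> step G (u @ [N A] @ v) (u @ [N B, N C] @ v)"

abbreviation derives :: "rule set \<Rightarrow> sym list \<Rightarrow> sym list \<Rightarrow> bool" where
  "derives G \<equiv> (step G)\<^sup>*\<^sup>*"

definition accessible :: "rule set \<Rightarrow> nt \<Rightarrow> bool" where
  "accessible G A = (\<exists>w. derives G [N Start] w \<and> N A \<in> set w)"

definition productive :: "rule set \<Rightarrow> nt \<Rightarrow> bool" where
  "productive G A = (\<exists>w. derives G [N A] (map T w))"

definition reduced :: "nat \<Rightarrow> rule set \<Rightarrow> bool" where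
  "reduced n G = (\<forall>A\<in>nonterms n. accessible G A \<and> productive G A)"

end

theory Submission
  imports Defs
begin

text \<open>Each nonterminal \<open>A\<close> is productive through \<open>A \<rightarrow> t\<^sub>1\<close> and accessible
  through \<open>S \<rightarrow> A A\<close>. Hence every set of CNF rules containing these \<open>2n\<close> core rules is a
  reduced grammar, and there are \<open>2^(N - 2n)\<close> such sets, where \<open>N = n t + (n + 1) n\<^sup>2\<close>
  is the number of all CNF rules.\<close>

lemma card_nonterms: "card (nonterms n) = n"
  unfolding nonterms_def by (simp add: card_image inj_on_def)

lemma finite_nonterms: "finite (nonterms n)"
  unfolding nonterms_def by simp

lemma Start_notin_nonterms: "Start \<notin> nonterms n"
  unfolding nonterms_def by auto

definition cnf_rules :: "nat \<Rightarrow> nat \<Rightarrow> rule set" where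
  "cnf_rules n t = {r. rule_ok n t r}"

lemma cnf_grammar_iff_subset_cnf_rules: "cnf_grammar n t G \<longleftrightarrow> G \<subseteq> cnf_rules n t"
  unfolding cnf_grammar_def cnf_rules_def by blast

lemma cnf_rules_eq:
  "cnf_rules n t = (\<lambda>(A, a). Lex A a) ` (nonterms n \<times> terms t)
     \<union> (\<lambda>(A, B, C). Bin A B C) ` (insert Start (nonterms n) \<times> nonterms n \<times> nonterms n)"
    (is "_ = ?lex \<union> ?bin")
proof (rule set_eqI)
  show "r \<in> cnf_rules n t \<longleftrightarrow> r \<in> ?lex \<union> ?bin" for r
    by (cases r) (force simp: cnf_rules_def rule_ok_def)+
qed

lemma finite_cnf_rules: "finite (cnf_rules n t)"
  unfolding cnf_rules_eq by (simp add: finite_nonterms terms_def)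

lemma finite_cnf_grammars: "finite {G. cnf_grammar n t G}"
  unfolding cnf_grammar_iff_subset_cnf_rules using finite_cnf_rules by simp

lemma card_cnf_rules: "card (cnf_rules n t) = n * t + (n + 1) * n\<^sup>2"
proof -
  let ?lex = "(\<lambda>(A, a). Lex A a) ` (nonterms n \<times> terms t)"
  let ?bin = "(\<lambda>(A, B, C). Bin A B C) ` (insert Start (nonterms n) \<times> nonterms n \<times> nonterms n)"
  have "card ?lex = n * t"
    by (subst card_image) (auto simp: inj_on_def card_cartesian_product card_nonterms terms_def)
  moreover have "card ?bin = (n + 1) * n\<^sup>2"
    by (subst card_image)
      (auto simp: inj_on_def card_cartesian_product card_nonterms finite_nonterms
        Start_notin_nonterms power2_eq_square)
  moreover have "card (?lex \<union> ?bin) = card ?lex + card ?bin"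
    by (rule card_Un_disjoint) (auto simp: finite_nonterms terms_def)
  ultimately show ?thesis
    unfolding cnf_rules_eq by simp
qed

lemma productive_if_Lex:
  assumes "Lex A a \<in> G"
  shows "productive G A"
proof -
  have "step G ([] @ [N A] @ []) ([] @ [T a] @ [])"
    using assms by (rule step.stepLex)
  then have "derives G [N A] (map T [a])"
    by simp
  then show ?thesis
    unfolding productive_def by blast
qed

lemma accessible_Start: "accessible G Start"
  unfolding accessible_def by auto

lemma accessible_Bin_left:
  assumes "accessible G A" and "Bin A B C \<in> G"
  shows "accessible G B"
proof -
  obtain w where w: "derives G [N Start] w" "N A \<in> set w"
    using assms(1) unfolding accessible_def by blast
  then obtain u v where "w = u @ [N A] @ v"
    using split_list by fastforce
  then have "step G w (u @ [N B, N C] @ v)"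
    using step.stepBin[OF assms(2)] by simp
  with w(1) have "derives G [N Start] (u @ [N B, N C] @ v)"
    by (rule rtranclp.rtrancl_into_rtrancl)
  then show ?thesis
    unfolding accessible_def by fastforce
qed

definition core_rules :: "nat \<Rightarrow> rule set" where
  "core_rules n = (\<lambda>A. Lex A 1) ` nonterms n \<union> (\<lambda>A. Bin Start A A) ` nonterms n"

lemma core_rules_subset_cnf_rules: "t \<ge> 1 \<Longrightarrow> core_rules n \<subseteq> cnf_rules n t"
  unfolding core_rules_def cnf_rules_def rule_ok_def terms_def by auto

lemma card_core_rules: "card (core_rules n) = 2 * n"
  unfolding core_rules_def
  by (subst card_Un_disjoint) (auto simp: card_image inj_on_def card_nonterms nonterms_def)

lemma reduced_if_core_rules_subset: "core_rules n \<subseteq> G \<Longrightarrow> reduced n G"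
  unfolding reduced_def core_rules_def
  by (blast intro: productive_if_Lex accessible_Bin_left[OF accessible_Start])

lemma card_supersets_within:
  assumes "finite U" and "C \<subseteq> U"
  shows "card {G. C \<subseteq> G \<and> G \<subseteq> U} = 2 ^ (card U - card C)"
proof -
  have "{G. C \<subseteq> G \<and> G \<subseteq> U} = (\<union>) C ` Pow (U - C)"
  proof (intro equalityI subsetI)
    fix G assume "G \<in> {G. C \<subseteq> G \<and> G \<subseteq> U}"
    then have "G = C \<union> (G - C)" and "G - C \<in> Pow (U - C)" by auto
    then show "G \<in> (\<union>) C ` Pow (U - C)" by (rule image_eqI)
  qed (use assms(2) in auto)
  moreover have "inj_on ((\<union>) C) (Pow (U - C))"
    unfolding inj_on_def by blast
  ultimately have "card {G. C \<subseteq> G \<and> G \<subseteq> U} = card (Pow (U - C))"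
    by (simp add: card_image)
  also have "\<dots> = 2 ^ card (U - C)"
    using assms(1) by (simp add: card_Pow)
  also have "card (U - C) = card U - card C"
    using assms by (meson card_Diff_subset finite_subset)
  finally show ?thesis .
qed

theorem lemma1:
  fixes n t l :: nat
  assumes "n \<ge> 1" and "t \<ge> 1" and "l \<ge> 1"
  shows "card {G. cnf_grammar n t G \<and> reduced n G} \<ge> 2 ^ (n^3 + n*t - 2*n)
     \<and> card {w :: nat list. length w = l \<and> set w \<subseteq> terms t} = t ^ l"
proof
  have "(2::nat) ^ (n^3 + n*t - 2*n) \<le> 2 ^ (card (cnf_rules n t) - card (core_rules n))"
    unfolding card_cnf_rules card_core_rules
    by (intro power_increasing diff_le_mono) (simp_all add: power2_eq_square power3_eq_cube)
  also have "\<dots> = card {G. core_rules n \<subseteq> G \<and> G \<subseteq> cnf_rules n t}"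
    using card_supersets_within[OF finite_cnf_rules core_rules_subset_cnf_rules[OF assms(2)]] ..
  also have "\<dots> \<le> card {G. cnf_grammar n t G \<and> reduced n G}"
    by (rule card_mono[OF finite_subset[OF _ finite_cnf_grammars]])
      (auto simp: cnf_grammar_iff_subset_cnf_rules intro: reduced_if_core_rules_subset)
  finally show "card {G. cnf_grammar n t G \<and> reduced n G} \<ge> 2 ^ (n^3 + n*t - 2*n)" .
  have "card {w :: nat list. set w \<subseteq> terms t \<and> length w = l} = t ^ l"
    using card_lists_length_eq[of "terms t" l] by (simp add: terms_def)
  then show "card {w :: nat list. length w = l \<and> set w \<subseteq> terms t} = t ^ l"
    by (simp add: conj_commute)
qed

end
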